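(* For every $n\ge 3$, \[ \max\{\rho(\mathsf{C}_n),1\} = \max\{\rho(\mathsf{SC}_n),1\}, \] where $\mathsf{C}_n$ is the compacted matrix of rank $n$ and $\mathsf{SC}_n$ is the super compacted matrix of rank $n$.
   Context: $\rho(M)$ is the spectral radius. The compacted matrix of rank $n$ is the $(2n-1)\times(2n-1)$ matrix $\mathsf{C}_n=(c_{ij})$ with: $c_{ij}=1$ if $j=i+1$ and $1\le i\le n-3$; $c_{ij}=1$ if $i=n-2$ and $j\in\{n-1,n\}$; $c_{ij}=n-2$ if $i=n-1$ and $1\le j\le n$; $c_{ij}=n-1$ if $i=n-1$ and $n+1\le j\le 2n-1$; $c_{nj}=1$ for all $j$; $c_{ij}=n-1$ if $i=n+1$ and $1\le j\le n-1$; $c_{ij}=n-2$ if $i=n+1$ and $n\le j\le 2n-1$; $c_{ij}=1$ if $i=n+2$ and $j\in\{n,n+1\}$; $c_{ij}=1$ if $j=i-1$ and $n+3\le i\le 2n-1$; $c_{ij}=0$ otherwise. The super compacted matrix of rank $n$ is the $n\times n$ matrix $\mathsf{SC}_n=(s_{ij})$ with: $s_{ij}=1$ if ($i\le n-2$ and $j=i+1$) or $i=n$; $s_{ij}=2$ if $i=n-2$ and $j=n$; $s_{ij}=2n-3$ if $i=n-1$ and $j<n$; $s_{ij}=2n-4$ if $i=n-1$ and $j=n$; $s_{ij}=0$ otherwise. *)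

theory Defs
  imports "Jordan_Normal_Form.Spectral_Radius"
begin

text \<open>Entries are given with the paper's 1-based indices i, j; the matrix
  library is 0-based, hence the shift by 1.\<close>

definition compacted_entry :: "nat \<Rightarrow> nat \<Rightarrow> nat \<Rightarrow> nat" where
  "compacted_entry n i j =
     (if j = i + 1 \<and> 1 \<le> i \<and> i \<le> n - 3 then 1
      else if i = n - 2 \<and> (j = n - 1 \<or> j = n) then 1
      else if i = n - 1 \<and> 1 \<le> j \<and> j \<le> n then n - 2
      else if i = n - 1 \<and> n + 1 \<le> j \<and> j \<le> 2 * n - 1 then n - 1
      else if i = n then 1
      else if i = n + 1 \<and> 1 \<le> j \<and> j \<le> n - 1 then n - 1
      else if i = n + 1 \<and> n \<le> j \<and> j \<le> 2 * n - 1 then n - 2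
      else if i = n + 2 \<and> (j = n \<or> j = n + 1) then 1
      else if j + 1 = i \<and> n + 3 \<le> i \<and> i \<le> 2 * n - 1 then 1
      else 0)"

definition compacted_matrix :: "nat \<Rightarrow> complex mat" where
  "compacted_matrix n = mat (2 * n - 1) (2 * n - 1)
     (\<lambda>(i, j). of_nat (compacted_entry n (i + 1) (j + 1)))"

definition super_compacted_entry :: "nat \<Rightarrow> nat \<Rightarrow> nat \<Rightarrow> nat" where
  "super_compacted_entry n i j =
     (if (i \<le> n - 2 \<and> j = i + 1) \<or> i = n then 1
      else if i = n - 2 \<and> j = n then 2
      else if i = n - 1 \<and> j < n then 2 * n - 3
      else if i = n - 1 \<and> j = n then 2 * n - 4
      else 0)"

definition super_compacted_matrix :: "nat \<Rightarrow> complex mat" where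
  "super_compacted_matrix n = mat n n
     (\<lambda>(i, j). of_nat (super_compacted_entry n (i + 1) (j + 1)))"

end

theory Submission
  imports Defs
begin

text \<open>The compacted matrix commutes with the reflection k \<mapsto> 2n-2-k of its (0-based) index
  set. Folding a vector onto its symmetric part therefore maps eigenvectors of the compacted
  matrix to eigenvectors of the super compacted matrix, and the symmetric extension maps them
  back; so every eigenvalue of the super compacted matrix is one of the compacted matrix, and
  conversely unless the fold vanishes. An eigenvector with vanishing fold is antisymmetric; for
  it the eigenvalue equations reduce to v_{k+1} = \<lambda> v_k and 1 + \<lambda> + \<dots> + \<lambda>^{n-1} = 0, so
  \<lambda>^n = 1. Hence the two spectra agree outside the unit circle.\<close>

lemma eigenvalue_iff_eigenfunction:
  assumes "A \<in> carrier_mat N N"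
  shows "eigenvalue A l \<longleftrightarrow>
    (\<exists>f. (\<exists>k<N. f k \<noteq> 0) \<and> (\<forall>i<N. (A *\<^sub>v vec N f) $ i = l * f i))"
proof
  assume "eigenvalue A l"
  then obtain v where v: "v \<in> carrier_vec N" "v \<noteq> 0\<^sub>v N" "A *\<^sub>v v = l \<cdot>\<^sub>v v"
    using assms unfolding eigenvalue_def eigenvector_def by auto
  have "vec N (($) v) = v" using v(1) by auto
  with v assms show "\<exists>f. (\<exists>k<N. f k \<noteq> 0) \<and> (\<forall>i<N. (A *\<^sub>v vec N f) $ i = l * f i)"
    by (intro exI[of _ "($) v"]) auto
next
  assume "\<exists>f. (\<exists>k<N. f k \<noteq> 0) \<and> (\<forall>i<N. (A *\<^sub>v vec N f) $ i = l * f i)"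
  then obtain f where "\<exists>k<N. f k \<noteq> 0" "\<forall>i<N. (A *\<^sub>v vec N f) $ i = l * f i" by blast
  then have "eigenvector A (vec N f) l"
    using assms unfolding eigenvector_def by (auto simp: vec_eq_iff)
  then show "eigenvalue A l" unfolding eigenvalue_def by blast
qed

lemma max_spectral_radius_one_le:
  assumes A: "A \<in> carrier_mat n n" and "n > 0"
    and B: "B \<in> carrier_mat k k" and "k > 0"
    and eig: "\<And>l. eigenvalue A l \<Longrightarrow> norm l > 1 \<Longrightarrow> eigenvalue B l"
  shows "max (spectral_radius A) 1 \<le> max (spectral_radius B) 1"
proof (cases "spectral_radius A > 1")
  case True
  obtain l where "eigenvalue A l" "spectral_radius A = norm l"
    using spectral_radius_mem_max(1)[OF A \<open>n > 0\<close>] unfolding spectrum_def by auto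
  with True eig have "norm l \<in> norm ` spectrum B" unfolding spectrum_def by auto
  with \<open>spectral_radius A = norm l\<close> have "spectral_radius A \<le> spectral_radius B"
    using spectral_radius_mem_max(2)[OF B \<open>k > 0\<close>] by simp
  then show ?thesis by simp
qed simp

lemma sum_lessThan_if_less:
  assumes "a \<le> N" shows "(\<Sum>k<N::nat. if k < a then f k else 0) = (\<Sum>k<a. f k)"
proof -
  have "{..<N} \<inter> {k. k < a} = {..<a}" using assms by auto
  then show ?thesis by (simp add: sum.If_cases)
qed

lemma sum_lessThan_if_ge: "(\<Sum>k<N::nat. if a \<le> k then f k else 0) = (\<Sum>k\<in>{a..<N}. f k)"
proof -
  have "{..<N} \<inter> {k. a \<le> k} = {a..<N}" by auto
  then show ?thesis by (simp add: sum.If_cases)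
qed

lemma sum_lessThan_two_points:
  assumes "a < N" "b < (N::nat)" "a \<noteq> b"
  shows "(\<Sum>k<N. if k = a \<or> k = b then f k else 0) = f a + f b"
proof -
  have "(\<Sum>k<N. if k = a \<or> k = b then f k else 0) =
      (\<Sum>k<N. (if k = a then f k else 0) + (if k = b then f k else 0))"
    using assms(3) by (intro sum.cong) auto
  then show ?thesis using assms by (simp add: sum.distrib)
qed

text \<open>The rank is written n = m+3, so that the dimensions 2n-1 and n become 2m+5 and m+3
  without truncated subtraction; rows and columns are 0-based.\<close>

definition compacted_mult :: "nat \<Rightarrow> (nat \<Rightarrow> complex) \<Rightarrow> nat \<Rightarrow> complex" where
  "compacted_mult m f i = (\<Sum>k<2*m+5. of_nat (compacted_entry (m+3) (i+1) (k+1)) * f k)"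

definition super_compacted_mult :: "nat \<Rightarrow> (nat \<Rightarrow> complex) \<Rightarrow> nat \<Rightarrow> complex" where
  "super_compacted_mult m g i = (\<Sum>k<m+3. of_nat (super_compacted_entry (m+3) (i+1) (k+1)) * g k)"

lemmas compacted_mult_simps = compacted_mult_def compacted_entry_def
  if_distrib[of of_nat] if_distrib[of "\<lambda>x. x * _"]

lemmas super_compacted_mult_simps = super_compacted_mult_def super_compacted_entry_def
  if_distrib[of of_nat] if_distrib[of "\<lambda>x. x * _"]

lemma compacted_mult_shift_up: "i < m \<Longrightarrow> compacted_mult m f i = f (i+1)"
  unfolding compacted_mult_simps by (simp cong: if_cong)

lemma compacted_mult_shift_down: "m+5 \<le> i \<Longrightarrow> i < 2*m+5 \<Longrightarrow> compacted_mult m f i = f (i-1)"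
  unfolding compacted_mult_simps by (cases i) (simp_all cong: if_cong)

lemma compacted_mult_m: "compacted_mult m f m = f (m+1) + f (m+2)"
  unfolding compacted_mult_simps by (simp add: sum_lessThan_two_points cong: if_cong)

lemma compacted_mult_m4: "compacted_mult m f (m+4) = f (m+2) + f (m+3)"
  unfolding compacted_mult_simps by (simp add: sum_lessThan_two_points add.commute cong: if_cong)

lemma compacted_mult_m1:
  "compacted_mult m f (m+1) = of_nat (m+1) * (\<Sum>k<2*m+5. f k) + (\<Sum>k\<in>{m+3..<2*m+5}. f k)"
proof -
  have "compacted_mult m f (m+1) = (\<Sum>k<2*m+5. of_nat (m+1) * f k + (if m+3 \<le> k then f k else 0))"
    unfolding compacted_mult_simps by (intro sum.cong) (auto simp: algebra_simps)
  then show ?thesis by (simp add: sum.distrib sum_distrib_left sum_lessThan_if_ge)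
qed

lemma compacted_mult_m2: "compacted_mult m f (m+2) = (\<Sum>k<2*m+5. f k)"
  unfolding compacted_mult_simps by simp

lemma compacted_mult_m3:
  "compacted_mult m f (m+3) = of_nat (m+1) * (\<Sum>k<2*m+5. f k) + (\<Sum>k<m+2. f k)"
proof -
  have "compacted_mult m f (m+3) = (\<Sum>k<2*m+5. of_nat (m+1) * f k + (if k < m+2 then f k else 0))"
    unfolding compacted_mult_simps by (intro sum.cong) (auto simp: algebra_simps)
  then show ?thesis by (simp add: sum.distrib sum_distrib_left sum_lessThan_if_less)
qed

lemma super_compacted_mult_shift_up: "i < m \<Longrightarrow> super_compacted_mult m g i = g (i+1)"
  unfolding super_compacted_mult_simps by (simp cong: if_cong)

lemma super_compacted_mult_m: "super_compacted_mult m g m = g (m+1) + 2 * g (m+2)"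
proof -
  have "super_compacted_mult m g m = (\<Sum>k<m+3. (if k = m+1 then g k else 0) + 2 * (if k = m+2 then g k else 0))"
    unfolding super_compacted_mult_simps by (intro sum.cong) auto
  then show ?thesis by (simp add: sum.distrib flip: sum_distrib_left)
qed

lemma super_compacted_mult_m1:
  "super_compacted_mult m g (m+1) = of_nat (2*m+2) * (\<Sum>k<m+3. g k) + (\<Sum>k<m+2. g k)"
proof -
  have "super_compacted_mult m g (m+1) = (\<Sum>k<m+3. of_nat (2*m+2) * g k + (if k < m+2 then g k else 0))"
    unfolding super_compacted_mult_simps by (intro sum.cong) (auto simp: algebra_simps)
  then show ?thesis by (simp add: sum.distrib sum_distrib_left sum_lessThan_if_less)
qed

lemma super_compacted_mult_m2: "super_compacted_mult m g (m+2) = (\<Sum>k<m+3. g k)"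
  unfolding super_compacted_mult_simps by simp

lemma compacted_matrix_carrier: "compacted_matrix (m+3) \<in> carrier_mat (2*m+5) (2*m+5)"
  unfolding compacted_matrix_def carrier_mat_def by simp

lemma super_compacted_matrix_carrier: "super_compacted_matrix (m+3) \<in> carrier_mat (m+3) (m+3)"
  unfolding super_compacted_matrix_def by simp

lemma compacted_matrix_mult_vec:
  "i < 2*m+5 \<Longrightarrow> (compacted_matrix (m+3) *\<^sub>v vec (2*m+5) f) $ i = compacted_mult m f i"
  unfolding compacted_matrix_def compacted_mult_def
  by (simp add: scalar_prod_def atLeast0LessThan)

lemma super_compacted_matrix_mult_vec:
  "i < m+3 \<Longrightarrow> (super_compacted_matrix (m+3) *\<^sub>v vec (m+3) g) $ i = super_compacted_mult m g i"
  unfolding super_compacted_matrix_def super_compacted_mult_def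
  by (simp add: scalar_prod_def atLeast0LessThan)

lemma eigenvalue_compacted_matrix_iff:
  "eigenvalue (compacted_matrix (m+3)) l \<longleftrightarrow>
    (\<exists>f. (\<exists>k<2*m+5. f k \<noteq> 0) \<and> (\<forall>i<2*m+5. compacted_mult m f i = l * f i))"
  by (simp add: eigenvalue_iff_eigenfunction[OF compacted_matrix_carrier] compacted_matrix_mult_vec)

lemma eigenvalue_super_compacted_matrix_iff:
  "eigenvalue (super_compacted_matrix (m+3)) l \<longleftrightarrow>
    (\<exists>g. (\<exists>k<m+3. g k \<noteq> 0) \<and> (\<forall>i<m+3. super_compacted_mult m g i = l * g i))"
  by (simp add: eigenvalue_iff_eigenfunction[OF super_compacted_matrix_carrier] super_compacted_matrix_mult_vec)

definition symmetric_extension :: "nat \<Rightarrow> (nat \<Rightarrow> complex) \<Rightarrow> nat \<Rightarrow> complex" where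
  "symmetric_extension m g k =
     (if k < m+2 then g k else if k = m+2 then 2 * g (m+2) else g (2*m+4-k))"

definition symmetric_fold :: "nat \<Rightarrow> (nat \<Rightarrow> complex) \<Rightarrow> nat \<Rightarrow> complex" where
  "symmetric_fold m f k = (if k < m+2 then f k + f (2*m+4-k) else f (m+2))"

lemma sum_upper_half_reflect:
  "(\<Sum>k\<in>{m+3..<2*m+5}. f k) = (\<Sum>k<m+2. f (2*m+4-k) :: complex)" for m :: nat
  by (rule sum.reindex_bij_witness[of _ "\<lambda>k. 2*m+4-k" "\<lambda>k. 2*m+4-k"]) auto

lemma sum_lessThan_add_3: "(\<Sum>k<m+3. f k) = (\<Sum>k<m+2. f k) + (f (m+2) :: complex)" for m :: nat
  using sum.lessThan_Suc[of f "m+2"] by (simp add: numeral_3_eq_3 numeral_2_eq_2)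

lemma sum_split_centre:
  "(\<Sum>k<2*m+5. f k) = (\<Sum>k<m+2. f k) + f (m+2) + (\<Sum>k\<in>{m+3..<2*m+5}. f k :: complex)"
  for m :: nat
proof -
  have "(\<Sum>k<2*m+5. f k) = (\<Sum>k<m+3. f k) + (\<Sum>k\<in>{m+3..<2*m+5}. f k)"
    using sum.atLeastLessThan_concat[of 0 "m+3" "2*m+5" f] by (simp add: atLeast0LessThan)
  then show ?thesis by (simp add: sum_lessThan_add_3)
qed

lemma compacted_mult_symmetric_extension:
  assumes "i < 2*m+5"
  shows "compacted_mult m (symmetric_extension m g) i = symmetric_extension m (super_compacted_mult m g) i"
proof -
  let ?e = "symmetric_extension m g"
  have lower: "(\<Sum>k<m+2. ?e k) = (\<Sum>k<m+2. g k)"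
    by (rule sum.cong) (auto simp: symmetric_extension_def)
  have upper: "(\<Sum>k\<in>{m+3..<2*m+5}. ?e k) = (\<Sum>k<m+2. g k)"
    unfolding sum_upper_half_reflect by (rule sum.cong) (auto simp: symmetric_extension_def)
  have total: "(\<Sum>k<2*m+5. ?e k) = 2 * (\<Sum>k<m+3. g k)"
    unfolding sum_split_centre lower upper sum_lessThan_add_3
    by (simp add: symmetric_extension_def distrib_left)
  consider "i < m" | "i = m" | "i = m+1" | "i = m+2" | "i = m+3" | "i = m+4" | "m+5 \<le> i"
    by linarith
  then show ?thesis
  proof cases
    case 1
    then show ?thesis
      by (simp add: compacted_mult_shift_up super_compacted_mult_shift_up symmetric_extension_def)
  next
    case 2
    then show ?thesis
      by (simp add: compacted_mult_m super_compacted_mult_m symmetric_extension_def)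
  next
    case 3
    then show ?thesis
      using compacted_mult_m1[of m] super_compacted_mult_m1[of m g] total upper
      by (simp add: symmetric_extension_def algebra_simps)
  next
    case 4
    then show ?thesis
      using compacted_mult_m2[of m] super_compacted_mult_m2[of m g] total
      by (simp add: symmetric_extension_def)
  next
    case 5
    then show ?thesis
      using compacted_mult_m3[of m] super_compacted_mult_m1[of m g] total lower
      by (simp add: symmetric_extension_def algebra_simps)
  next
    case 6
    then show ?thesis
      by (simp add: compacted_mult_m4 super_compacted_mult_m symmetric_extension_def)
  next
    case 7
    then have "\<not> i < m+2" "i \<noteq> m+2" "\<not> i-1 < m+2" "i-1 \<noteq> m+2"
      "2*m+4-i < m" "2*m+4-(i-1) = 2*m+4-i+1" using assms by linarith+
    with 7 assms show ?thesis
      by (simp add: compacted_mult_shift_down super_compacted_mult_shift_up symmetric_extension_def)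
  qed
qed

lemma super_compacted_mult_symmetric_fold:
  assumes "i < m+3"
  shows "super_compacted_mult m (symmetric_fold m f) i = symmetric_fold m (compacted_mult m f) i"
proof -
  let ?h = "symmetric_fold m f"
  have lower: "(\<Sum>k<m+2. ?h k) = (\<Sum>k<m+2. f k) + (\<Sum>k\<in>{m+3..<2*m+5}. f k)"
    unfolding sum_upper_half_reflect sum.distrib[symmetric]
    by (rule sum.cong) (auto simp: symmetric_fold_def)
  have total: "(\<Sum>k<m+3. ?h k) = (\<Sum>k<2*m+5. f k)"
    unfolding sum_split_centre sum_lessThan_add_3 lower by (simp add: symmetric_fold_def)
  consider "i < m" | "i = m" | "i = m+1" | "i = m+2" using assms by linarith
  then show ?thesis
  proof cases
    case 1
    then have "m+5 \<le> 2*m+4-i" "2*m+4-i < 2*m+5" "2*m+4-i-1 = 2*m+4-(i+1)" by linarith+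
    with 1 show ?thesis
      by (simp add: compacted_mult_shift_up compacted_mult_shift_down super_compacted_mult_shift_up
          symmetric_fold_def)
  next
    case 2
    then show ?thesis
      using compacted_mult_m[of m f] compacted_mult_m4[of m f] super_compacted_mult_m[of m ?h]
      by (simp add: symmetric_fold_def add.commute)
  next
    case 3
    then show ?thesis
      using compacted_mult_m1[of m f] compacted_mult_m3[of m f] super_compacted_mult_m1[of m ?h]
        total lower
      by (simp add: symmetric_fold_def algebra_simps)
  next
    case 4
    then show ?thesis
      using compacted_mult_m2[of m f] super_compacted_mult_m2[of m ?h] total
      by (simp add: symmetric_fold_def)
  qed
qed

lemma compacted_eigenvalue_root_of_unity_if_fold_zero:
  assumes eig: "\<And>i. i < 2*m+5 \<Longrightarrow> compacted_mult m f i = l * f i"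
    and nonzero: "\<exists>k<2*m+5. f k \<noteq> 0"
    and fold_zero: "\<And>k. k < m+3 \<Longrightarrow> symmetric_fold m f k = 0"
  shows "l ^ (m+3) = 1"
proof -
  have centre: "f (m+2) = 0"
    using fold_zero[of "m+2"] by (simp add: symmetric_fold_def)
  have reflect: "f (2*m+4-k) = - f k" if "k < m+2" for k
    using fold_zero[of k] that by (simp add: symmetric_fold_def add_eq_0_iff)
  have powers: "f k = l ^ k * f 0" if "k \<le> m+1" for k
    using that
  proof (induction k)
    case (Suc k)
    then have "f (k+1) = l * f k"
      using eig[of k] compacted_mult_shift_up[of k m f] compacted_mult_m[of m f] centre
      by (cases "k < m") auto
    with Suc show ?case by simp
  qed simp
  have upper: "(\<Sum>k\<in>{m+3..<2*m+5}. f k) = - (\<Sum>k<m+2. f k)"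
    unfolding sum_upper_half_reflect sum_negf[symmetric] by (rule sum.cong) (simp_all add: reflect)
  have total: "(\<Sum>k<2*m+5. f k) = 0"
    unfolding sum_split_centre centre upper by simp
  have "l ^ (m+2) * f 0 = l * f (m+1)"
    using powers[of "m+1"] by simp
  also have "\<dots> = compacted_mult m f (m+1)"
    using eig[of "m+1"] by simp
  also have "\<dots> = - (\<Sum>k<m+2. f k)"
    unfolding compacted_mult_m1 total upper by simp
  also have "\<dots> = - (\<Sum>k<m+2. l ^ k * f 0)"
    by (intro arg_cong[where f = uminus] sum.cong refl powers) simp
  finally have "f 0 * (\<Sum>k<m+3. l ^ k) = 0"
    unfolding sum_lessThan_add_3 distrib_left sum_distrib_left by (simp add: mult.commute)
  moreover have "f 0 \<noteq> 0"
  proof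
    assume "f 0 = 0"
    have "f k = 0" if "k < 2*m+5" for k
    proof -
      consider "k \<le> m+1" | "k = m+2" | "m+3 \<le> k" by linarith
      then show ?thesis
      proof cases
        case 1
        then show ?thesis using powers[of k] \<open>f 0 = 0\<close> by simp
      next
        case 2
        then show ?thesis using centre by simp
      next
        case 3
        then have "f (2*m+4-k) = 0" using powers[of "2*m+4-k"] \<open>f 0 = 0\<close> by simp
        moreover have "f k = - f (2*m+4-k)" using reflect[of "2*m+4-k"] 3 that by simp
        ultimately show ?thesis by simp
      qed
    qed
    with nonzero show False by blast
  qed
  ultimately have "(\<Sum>k<m+3. l ^ k) = 0" by simp
  then show ?thesis
    using power_diff_1_eq[of l "m+3"] by simp
qed

lemma eigenvalue_compacted_matrix_if_eigenvalue_super_compacted: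
  assumes "eigenvalue (super_compacted_matrix (m+3)) l"
  shows "eigenvalue (compacted_matrix (m+3)) l"
proof -
  obtain g where nonzero: "\<exists>k<m+3. g k \<noteq> 0"
    and eig: "\<And>i. i < m+3 \<Longrightarrow> super_compacted_mult m g i = l * g i"
    using assms unfolding eigenvalue_super_compacted_matrix_iff by blast
  let ?f = "symmetric_extension m g"
  have "\<exists>k<2*m+5. ?f k \<noteq> 0"
  proof -
    from nonzero obtain k where "k < m+3" "g k \<noteq> 0" by blast
    then show ?thesis
      by (cases "k = m+2") (auto simp: symmetric_extension_def intro!: exI[of _ k])
  qed
  moreover have "compacted_mult m ?f i = l * ?f i" if "i < 2*m+5" for i
    using that eig by (simp add: compacted_mult_symmetric_extension symmetric_extension_def)
  ultimately show ?thesis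
    unfolding eigenvalue_compacted_matrix_iff by blast
qed

lemma eigenvalue_super_compacted_matrix_if_eigenvalue_compacted:
  assumes "eigenvalue (compacted_matrix (m+3)) l" and "norm l \<noteq> 1"
  shows "eigenvalue (super_compacted_matrix (m+3)) l"
proof -
  obtain f where nonzero: "\<exists>k<2*m+5. f k \<noteq> 0"
    and eig: "\<And>i. i < 2*m+5 \<Longrightarrow> compacted_mult m f i = l * f i"
    using assms(1) unfolding eigenvalue_compacted_matrix_iff by blast
  let ?g = "symmetric_fold m f"
  have "\<exists>k<m+3. ?g k \<noteq> 0"
  proof (rule ccontr)
    assume "\<not> ?thesis"
    then have "l ^ (m+3) = 1"
      using compacted_eigenvalue_root_of_unity_if_fold_zero[OF eig nonzero] by blast
    with assms(2) show False
      using power_eq_1_iff by fastforce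
  qed
  moreover have "super_compacted_mult m ?g i = l * ?g i" if "i < m+3" for i
    using that eig by (simp add: super_compacted_mult_symmetric_fold symmetric_fold_def algebra_simps)
  ultimately show ?thesis
    unfolding eigenvalue_super_compacted_matrix_iff by blast
qed

theorem proposition5p1:
  fixes n :: nat
  assumes "n \<ge> 3"
  shows "max (spectral_radius (compacted_matrix n)) 1
       = max (spectral_radius (super_compacted_matrix n)) 1"
proof -
  obtain m where n: "n = m+3"
    using assms by (metis add.commute le_Suc_ex)
  have "max (spectral_radius (compacted_matrix n)) 1
      \<le> max (spectral_radius (super_compacted_matrix n)) 1"
    unfolding n
    by (rule max_spectral_radius_one_le[OF compacted_matrix_carrier _ super_compacted_matrix_carrier])
      (simp_all add: eigenvalue_super_compacted_matrix_if_eigenvalue_compacted)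
  moreover have "max (spectral_radius (super_compacted_matrix n)) 1
      \<le> max (spectral_radius (compacted_matrix n)) 1"
    unfolding n
    by (rule max_spectral_radius_one_le[OF super_compacted_matrix_carrier _ compacted_matrix_carrier])
      (simp_all add: eigenvalue_compacted_matrix_if_eigenvalue_super_compacted)
  ultimately show ?thesis by linarith
qed

end
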